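(* Let $v$ be a Llull matrix on a finite set $A$ with path scores $v^*$, and let $x,y,z\in A$ be pairwise distinct. If $v^*_{yz}>v^*_{xz}$, then $v^*_{xz}\ge v^*_{xy}$. If $v^*_{xy}>v^*_{xz}$, then $v^*_{xz}\ge v^*_{yz}$.
   Context: A Llull matrix on $A$ is a family of real numbers $v_{xy}\in[0,1]$, indexed by ordered pairs $(x,y)$ of distinct elements of $A$, with $v_{xy}+v_{yx}\le1$. The path scores are $v^*_{xy}=\max\min(v_{x_0x_1},\dots,v_{x_{m-1}x_m})$, the maximum over all paths $x_0x_1\dots x_m$ with $m\ge1$, $x_0=x$, $x_m=y$ and the $x_i$ pairwise distinct. *)

theory Defs
  imports Complex_Main
begin

definition llull_matrix :: "'a set \<Rightarrow> ('a \<Rightarrow> 'a \<Rightarrow> real) \<Rightarrow> bool" where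
  "llull_matrix A v \<longleftrightarrow>
     (\<forall>x\<in>A. \<forall>y\<in>A. x \<noteq> y \<longrightarrow> 0 \<le> v x y \<and> v x y \<le> 1 \<and> v x y + v y x \<le> 1)"

definition llull_paths :: "'a set \<Rightarrow> 'a \<Rightarrow> 'a \<Rightarrow> 'a list set" where
  "llull_paths A x y =
     {p. distinct p \<and> set p \<subseteq> A \<and> 2 \<le> length p \<and> hd p = x \<and> last p = y}"

definition path_min :: "('a \<Rightarrow> 'a \<Rightarrow> real) \<Rightarrow> 'a list \<Rightarrow> real" where
  "path_min v p = Min (set (map (\<lambda>(a, b). v a b) (zip p (tl p))))"

definition path_score :: "'a set \<Rightarrow> ('a \<Rightarrow> 'a \<Rightarrow> real) \<Rightarrow> 'a \<Rightarrow> 'a \<Rightarrow> real" where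
  "path_score A v x y = Max (path_min v ` llull_paths A x y)"

end

theory Submission
  imports Defs "HOL-Library.Transitive_Closure_Table"
begin

text \<open>For every threshold t, the score v*_{xy} is at least t iff y is reachable from x along
  edges of value at least t: one direction reads the edges off an optimal path, the other
  shortcuts a walk to a path with distinct vertices. Reachability is transitive, so
  min (v*_{xy}) (v*_{yz}) \<le> v*_{xz}, and both claims are rearrangements of this inequality.\<close>

definition strong_edge :: "'a set \<Rightarrow> ('a \<Rightarrow> 'a \<Rightarrow> real) \<Rightarrow> real \<Rightarrow> 'a \<Rightarrow> 'a \<Rightarrow> bool" where
  "strong_edge A v t a b \<longleftrightarrow> a \<in> A \<and> b \<in> A \<and> t \<le> v a b"

lemma rtrancl_path_iff_zip:
  "rtrancl_path r a xs b \<longleftrightarrow> (\<forall>(c, d)\<in>set (zip (a # xs) xs). r c d) \<and> b = last (a # xs)"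
proof (induction xs arbitrary: a)
  case Nil
  then show ?case by (auto elim: rtrancl_path.cases intro: rtrancl_path.base)
next
  case (Cons y ys)
  have "rtrancl_path r a (y # ys) b \<longleftrightarrow> r a y \<and> rtrancl_path r y ys b"
    by (auto elim: rtrancl_path.cases intro: rtrancl_path.step)
  then show ?case using Cons by auto
qed

lemma finite_llull_paths: "finite A \<Longrightarrow> finite (llull_paths A x y)"
  by (rule finite_subset[OF _ finite_subset_distinct[of A]]) (auto simp: llull_paths_def)

lemma path_min_le_path_score:
  "finite A \<Longrightarrow> p \<in> llull_paths A x y \<Longrightarrow> path_min v p \<le> path_score A v x y"
  unfolding path_score_def by (auto intro: Max_ge finite_llull_paths)

lemma path_score_attained:
  assumes "finite A" "x \<in> A" "y \<in> A" "x \<noteq> y"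
  obtains p where "p \<in> llull_paths A x y" "path_min v p = path_score A v x y"
proof -
  have "[x, y] \<in> llull_paths A x y" using assms by (auto simp: llull_paths_def)
  then show thesis
    using that Max_in[of "path_min v ` llull_paths A x y"] finite_llull_paths[OF assms(1)]
    unfolding path_score_def by fastforce
qed

lemma path_min_ge_iff:
  assumes "2 \<le> length p"
  shows "t \<le> path_min v p \<longleftrightarrow> (\<forall>(c, d)\<in>set (zip p (tl p)). t \<le> v c d)"
proof -
  obtain a b rest where "p = a # b # rest" using assms
    by (metis One_nat_def Suc_1 Suc_le_length_iff)
  then show ?thesis unfolding path_min_def by (subst Min_ge_iff) auto
qed

lemma rtrancl_path_strong_edge_if_path_min_ge:
  assumes "p \<in> llull_paths A x y" "t \<le> path_min v p"
  shows "rtrancl_path (strong_edge A v t) x (tl p) y"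
proof -
  have p: "set p \<subseteq> A" "2 \<le> length p" "hd p = x" "last p = y"
    using assms(1) by (auto simp: llull_paths_def)
  then obtain ps where ps: "p = x # ps" by (cases p) auto
  have "t \<le> v c d" if "(c, d) \<in> set (zip p (tl p))" for c d
    using assms(2) path_min_ge_iff[OF p(2)] that by blast
  moreover have "c \<in> A \<and> d \<in> A" if "(c, d) \<in> set (zip p (tl p))" for c d
    using p(1) set_zip_leftD[OF that] set_zip_rightD[OF that] ps by auto
  ultimately have "\<forall>(c, d)\<in>set (zip (x # ps) ps). strong_edge A v t c d"
    unfolding strong_edge_def ps by auto
  then show ?thesis
    using p(4) unfolding rtrancl_path_iff_zip ps by simp
qed

lemma llull_path_if_rtrancl_path_strong_edge:
  assumes "rtrancl_path (strong_edge A v t) x xs y" "distinct (x # xs)" "x \<noteq> y"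
  shows "x # xs \<in> llull_paths A x y" and "t \<le> path_min v (x # xs)"
proof -
  have edges: "\<forall>(c, d)\<in>set (zip (x # xs) xs). strong_edge A v t c d" and y: "y = last (x # xs)"
    using assms(1) unfolding rtrancl_path_iff_zip by auto
  obtain x' xs' where xs: "xs = x' # xs'"
    using y assms(3) by (cases xs) auto
  have "\<forall>i<length xs. (x # xs) ! i \<in> A \<and> xs ! i \<in> A"
    using edges by (fastforce simp: set_zip strong_edge_def)
  then have "x \<in> A" "set xs \<subseteq> A"
    using xs by (metis length_Cons nth_Cons_0 zero_less_Suc, auto simp: set_conv_nth)
  then show "x # xs \<in> llull_paths A x y"
    using assms(2) y xs by (auto simp: llull_paths_def)
  show "t \<le> path_min v (x # xs)"
    using edges xs path_min_ge_iff[of "x # xs" t v] by (auto simp: strong_edge_def)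
qed

lemma path_score_ge_iff_reachable:
  assumes "finite A" "x \<in> A" "y \<in> A" "x \<noteq> y"
  shows "t \<le> path_score A v x y \<longleftrightarrow> (strong_edge A v t)\<^sup>*\<^sup>* x y"
proof
  assume "t \<le> path_score A v x y"
  obtain p where "p \<in> llull_paths A x y" "path_min v p = path_score A v x y"
    using path_score_attained[OF assms] .
  then show "(strong_edge A v t)\<^sup>*\<^sup>* x y"
    using \<open>t \<le> path_score A v x y\<close> rtrancl_path_strong_edge_if_path_min_ge
    by (metis rtranclp_eq_rtrancl_path)
next
  assume "(strong_edge A v t)\<^sup>*\<^sup>* x y"
  then obtain xs where "rtrancl_path (strong_edge A v t) x xs y"
    by (auto simp: rtranclp_eq_rtrancl_path)
  then obtain xs' where "rtrancl_path (strong_edge A v t) x xs' y" "distinct (x # xs')"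
    by (rule rtrancl_path_distinct)
  from llull_path_if_rtrancl_path_strong_edge[OF this assms(4)]
  show "t \<le> path_score A v x y"
    using path_min_le_path_score[OF assms(1)] order_trans by blast
qed

lemma min_path_score_le:
  assumes "finite A" "x \<in> A" "y \<in> A" "z \<in> A" "x \<noteq> y" "y \<noteq> z" "x \<noteq> z"
  shows "min (path_score A v x y) (path_score A v y z) \<le> path_score A v x z"
proof -
  let ?t = "min (path_score A v x y) (path_score A v y z)"
  have "(strong_edge A v ?t)\<^sup>*\<^sup>* x y" "(strong_edge A v ?t)\<^sup>*\<^sup>* y z"
    using path_score_ge_iff_reachable[OF assms(1,2,3,5), of ?t v]
      path_score_ge_iff_reachable[OF assms(1,3,4,6), of ?t v] by simp_all
  then show ?thesis
    using path_score_ge_iff_reachable[OF assms(1,2,4,7)] by (meson rtranclp_trans)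
qed

theorem lemma2p6:
  fixes A :: "'a set" and v :: "'a \<Rightarrow> 'a \<Rightarrow> real" and x y z :: 'a
  assumes "finite A" and "llull_matrix A v"
    and "x \<in> A" and "y \<in> A" and "z \<in> A"
    and "x \<noteq> y" and "y \<noteq> z" and "x \<noteq> z"
  shows "(path_score A v y z > path_score A v x z \<longrightarrow> path_score A v x z \<ge> path_score A v x y)
       \<and> (path_score A v x y > path_score A v x z \<longrightarrow> path_score A v x z \<ge> path_score A v y z)"
  using min_path_score_le[OF assms(1,3-8), of v] by linarith

end
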